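(* Let $V$ be a finite set, $f:2^V\to\mathbb{R}_+$ a nonnegative submodular function, and $t_1,\ldots,t_k\in V$ distinct terminals. Let $\mathbf{x}=(x_{i,j})_{i\in[k],j\in V}$ be a feasible solution of the relaxation $$\min \sum_{i=1}^k \hat f(\mathbf{x}_i)\quad\text{s.t.}\quad \sum_{i=1}^k x_{i,j}=1\ \ \forall j\in V,\qquad x_{i,t_i}=1\ \ \forall i\in[k],\qquad x_{i,j}\ge 0\ \ \forall i,j,$$ where $\mathbf{x}_i=(x_{i,j})_{j\in V}$. Consider the following randomized rounding: choose $\theta\in(\tfrac12,1]$ uniformly at random, let $A_i(\theta)=\{j\in V: x_{i,j}>\theta\}$ for $i\in[k]$ and $U(\theta)=V\setminus\bigcup_{i=1}^k A_i(\theta)$, choose $i'\in[k]$ uniformly at random, and assign to terminal $i$ the set $A_i(\theta)$ if $i\neq i'$ and the set $A_{i'}(\theta)\cup U(\theta)$ if $i=i'$. Then this rounding produces a feasible solution (a partition $(S_1,\ldots,S_k)$ of $V$ with $t_i\in S_i$) whose expected value $\mathbb{E}[\sum_{i=1}^k f(S_i)]$ is at most $(2-\tfrac{2}{k})\sum_{i=1}^k \hat f(\mathbf{x}_i)$.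
   Context: For $\mathbf{y}\in[0,1]^V$, the Lovász extension is $\hat f(\mathbf{y})=\mathbb{E}_{\theta}[f(\{j\in V: y_j>\theta\})]$ where $\theta$ is uniform in $[0,1]$. *)

theory Defs
  imports "HOL-Analysis.Analysis"
begin

definition submodular_on :: "'a set \<Rightarrow> ('a set \<Rightarrow> real) \<Rightarrow> bool" where
  "submodular_on V f \<longleftrightarrow>
     (\<forall>A B. A \<subseteq> V \<longrightarrow> B \<subseteq> V \<longrightarrow> f (A \<union> B) + f (A \<inter> B) \<le> f A + f B)"

definition lovasz_ext :: "'a set \<Rightarrow> ('a set \<Rightarrow> real) \<Rightarrow> ('a \<Rightarrow> real) \<Rightarrow> real" where
  "lovasz_ext V f y = integral {0..1} (\<lambda>\<theta>. f {j \<in> V. y j > \<theta>})"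

definition relax_feasible :: "'a set \<Rightarrow> nat \<Rightarrow> (nat \<Rightarrow> 'a) \<Rightarrow> (nat \<Rightarrow> 'a \<Rightarrow> real) \<Rightarrow> bool" where
  "relax_feasible V k t x \<longleftrightarrow>
     (\<forall>j\<in>V. (\<Sum>i<k. x i j) = 1) \<and> (\<forall>i<k. x i (t i) = 1) \<and> (\<forall>i<k. \<forall>j\<in>V. x i j \<ge> 0)"

definition level_set :: "'a set \<Rightarrow> (nat \<Rightarrow> 'a \<Rightarrow> real) \<Rightarrow> nat \<Rightarrow> real \<Rightarrow> 'a set" where
  "level_set V x i \<theta> = {j \<in> V. x i j > \<theta>}"

definition unassigned :: "'a set \<Rightarrow> nat \<Rightarrow> (nat \<Rightarrow> 'a \<Rightarrow> real) \<Rightarrow> real \<Rightarrow> 'a set" where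
  "unassigned V k x \<theta> = V - (\<Union>i<k. level_set V x i \<theta>)"

definition rounded_set :: "'a set \<Rightarrow> nat \<Rightarrow> (nat \<Rightarrow> 'a \<Rightarrow> real) \<Rightarrow> real \<Rightarrow> nat \<Rightarrow> nat \<Rightarrow> 'a set" where
  "rounded_set V k x \<theta> i' i =
     (if i = i' then level_set V x i' \<theta> \<union> unassigned V k x \<theta> else level_set V x i \<theta>)"

text \<open>Expected cost: theta uniform in (1/2,1] (density 2), i' uniform in {0..<k}.\<close>
definition expected_rounding_cost :: "'a set \<Rightarrow> ('a set \<Rightarrow> real) \<Rightarrow> nat \<Rightarrow> (nat \<Rightarrow> 'a \<Rightarrow> real) \<Rightarrow> real" where
  "expected_rounding_cost V f k x =
     (1 / real k) * (\<Sum>i'<k. 2 * integral {1/2<..1} (\<lambda>\<theta>. \<Sum>i<k. f (rounded_set V k x \<theta> i' i)))"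

end

theory Submission
  imports Defs
begin

text \<open>Two coordinates of a column of \<open>x\<close> cannot both exceed 1/2, so for \<open>\<theta> > 1/2\<close> the sets
  \<open>A\<^sub>i(\<theta>)\<close> are disjoint and the rounding is a partition with \<open>t\<^sub>i \<in> S\<^sub>i\<close>.

  For the cost, split the Lovasz extension at the threshold 1/2 into a lower part \<open>L\<close>
  (thresholds below 1/2) and an upper part \<open>U\<close>. Given \<open>i'\<close>, a set \<open>S\<^sub>i = A\<^sub>i(\<theta>)\<close> with \<open>i \<noteq> i'\<close> costs
  \<open>2 U(x\<^sub>i)\<close> in expectation over \<open>\<theta>\<close>; after the reflection \<open>\<theta> \<mapsto> 1 - \<theta>\<close> the set
  \<open>A\<^sub>i\<^sub>'(\<theta>) \<union> U(\<theta>)\<close> is a superlevel set of \<open>max(u, x\<^sub>i\<^sub>')\<close>, where \<open>u\<^sub>j = min(1/2, 1 - max\<^sub>i x\<^sub>i\<^sub>,\<^sub>j)\<close>,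
  so it costs \<open>2 L(max(u, x\<^sub>i\<^sub>'))\<close>. The expected cost is therefore
  \<open>(2/k)(\<Sum>\<^sub>i L(max(u,x\<^sub>i)) + (k-1) \<Sum>\<^sub>i U(x\<^sub>i))\<close>, and it suffices to show
  \<open>\<Sum>\<^sub>i L(max(u,x\<^sub>i)) \<le> (k-1) \<Sum>\<^sub>i L(x\<^sub>i)\<close>. Submodularity of \<open>f\<close> makes \<open>L\<close> submodular on vectors:
  \<open>L(max(u,x\<^sub>i)) + L(min(u,x\<^sub>i)) \<le> L(u) + L(x\<^sub>i)\<close>. On vectors bounded by 1/2 the Lovasz extension is
  \<open>L + f({})/2\<close>, so its convexity applied to \<open>u = \<Sum>\<^sub>i min(u,x\<^sub>i)/2\<close> gives
  \<open>2 L(u) \<le> \<Sum>\<^sub>i L(min(u,x\<^sub>i))\<close>, and applied to \<open>1 - max\<^sub>i x\<^sub>i = \<Sum>\<^sub>r min(max\<^sub>l\<^sub><\<^sub>r x\<^sub>l, x\<^sub>r)\<close> it gives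
  \<open>L(u) \<le> \<Sum>\<^sub>i L(x\<^sub>i)\<close> when \<open>k \<ge> 3\<close>.\<close>

section \<open>Superlevel sets\<close>

definition superlevel_set :: "'a set \<Rightarrow> ('a \<Rightarrow> real) \<Rightarrow> real \<Rightarrow> 'a set" where
  "superlevel_set V v \<theta> = {j \<in> V. \<theta> < v j}"

lemma superlevel_set_subset: "superlevel_set V v \<theta> \<subseteq> V"
  by (auto simp: superlevel_set_def)

lemma lovasz_ext_superlevel_set:
  "lovasz_ext V f v = integral {0..1} (\<lambda>\<theta>. f (superlevel_set V v \<theta>))"
  by (simp add: lovasz_ext_def superlevel_set_def)

lemma level_set_eq_superlevel_set: "level_set V x i \<theta> = superlevel_set V (x i) \<theta>"
  by (simp add: level_set_def superlevel_set_def)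

text \<open>On a finite ground set, \<open>\<theta> \<mapsto> g (superlevel_set V v \<theta>)\<close> is a finite combination of
  indicator functions of Borel sets.\<close>
lemma integrable_superlevel_set:
  fixes g :: "'a set \<Rightarrow> real"
  assumes "finite V"
  shows "(\<lambda>\<theta>. g (superlevel_set V v \<theta>)) integrable_on {a..b}"
proof -
  let ?E = "\<lambda>S. {\<theta>. superlevel_set V v \<theta> = S}"
  have "?E S \<in> sets borel" for S
  proof -
    have "?E S = (if S \<subseteq> V then {\<theta>. \<forall>j\<in>V. (\<theta> < v j) = (j \<in> S)} else {})"
      by (auto simp: superlevel_set_def)
    moreover have "{\<theta>::real. \<forall>j\<in>V. (\<theta> < v j) = (j \<in> S)} \<in> sets borel"
      using assms by measurable
    ultimately show ?thesis by simp
  qed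
  then have "?E S \<inter> {a..b} \<in> lmeasurable" for S
    by (intro bounded_set_imp_lmeasurable sets.Int)
       (auto simp: bounded_Int intro: sets_completionI_sets)
  then have "(\<lambda>\<theta>. if \<theta> \<in> ?E S then g S else 0) integrable_on {a..b}" for S
    using integrable_restrict_Int[of "?E S" "\<lambda>_. g S" "{a..b}"] integrable_on_const by blast
  then have "(\<lambda>\<theta>. \<Sum>S\<in>Pow V. if \<theta> \<in> ?E S then g S else 0) integrable_on {a..b}"
    using assms by (intro integrable_sum) auto
  moreover have "g (superlevel_set V v \<theta>) = (\<Sum>S\<in>Pow V. if \<theta> \<in> ?E S then g S else 0)" for \<theta>
    using assms superlevel_set_subset[of V v \<theta>] by simp
  ultimately show ?thesis by simp
qed

lemma integral_sum_superlevel_set: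
  assumes "finite V" and "\<forall>j\<in>V. 0 \<le> v j \<and> v j \<le> c"
  shows "integral {0..c} (\<lambda>\<theta>. sum s (superlevel_set V v \<theta>)) = (\<Sum>j\<in>V. s j * v j)"
proof -
  let ?h = "\<lambda>j \<theta>. if \<theta> \<in> {..<v j} then s j else 0"
  have "(?h j has_integral s j * v j) {0..c}" if "j \<in> V" for j
  proof -
    have "((\<lambda>_. s j) has_integral s j * v j) {0..v j}"
      using assms(2) that has_integral_const_real[of "s j" 0 "v j"] by (simp add: mult.commute)
    then have "((\<lambda>_. s j) has_integral s j * v j) {0..<v j}"
      by (rule has_integral_spike_set_eq[THEN iffD1, rotated 2])
         (rule negligible_subset[of "{v j}"]; auto)+
    moreover have "{..<v j} \<inter> {0..c} = {0..<v j}"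
      using assms(2) that by auto
    ultimately show ?thesis
      using has_integral_restrict_Int[of "{..<v j}" "\<lambda>_. s j" _ "{0..c}"] by simp
  qed
  then have "((\<lambda>\<theta>. \<Sum>j\<in>V. ?h j \<theta>) has_integral (\<Sum>j\<in>V. s j * v j)) {0..c}"
    by (rule has_integral_sum[OF assms(1)])
  moreover have "sum s (superlevel_set V v \<theta>) = (\<Sum>j\<in>V. ?h j \<theta>)" for \<theta>
    using assms(1) by (simp add: superlevel_set_def sum.inter_filter[symmetric])
  ultimately show ?thesis by (simp add: integral_unique)
qed

section \<open>Convexity of the Lovasz extension\<close>

text \<open>For \<open>P = {}\<close> this is the greedy vertex of the base polytope of \<open>f\<close> for the order \<open>xs\<close>.\<close>
fun marginal_gain :: "('a set \<Rightarrow> real) \<Rightarrow> 'a set \<Rightarrow> 'a list \<Rightarrow> 'a \<Rightarrow> real" where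
  "marginal_gain f P [] j = 0"
| "marginal_gain f P (y # ys) j =
     (if j = y then f (insert y P) - f P else marginal_gain f (insert y P) ys j)"

lemma sum_marginal_gain_take:
  assumes "distinct xs" "set xs \<inter> P = {}"
  shows "sum (marginal_gain f P xs) (set (take n xs)) = f (P \<union> set (take n xs)) - f P"
  using assms
proof (induction xs arbitrary: P n)
  case Nil
  then show ?case by simp
next
  case (Cons y ys)
  show ?case
  proof (cases n)
    case 0
    then show ?thesis by simp
  next
    case (Suc n')
    have y: "y \<notin> set (take n' ys)"
      using Cons.prems(1) by (auto dest: in_set_takeD)
    have "sum (marginal_gain f P (y # ys)) (set (take n' ys))
        = sum (marginal_gain f (insert y P) ys) (set (take n' ys))"
      by (rule sum.cong) (use y in auto)
    also have "\<dots> = f (insert y P \<union> set (take n' ys)) - f (insert y P)"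
      using Cons.prems by (intro Cons.IH) auto
    finally show ?thesis
      using y Suc by simp
  qed
qed

lemma sum_marginal_gain_le:
  assumes "distinct xs" "set xs \<inter> P = {}" "P \<union> set xs \<subseteq> V" "submodular_on V f" "A \<subseteq> V"
  shows "sum (marginal_gain f P xs) (A \<inter> set xs) \<le> f (A \<inter> (P \<union> set xs)) - f (A \<inter> P)"
  using assms
proof (induction xs arbitrary: P)
  case Nil
  then show ?case by simp
next
  case (Cons y ys)
  have y: "y \<notin> set ys" "y \<notin> P" "y \<in> V"
    using Cons.prems by auto
  have "sum (marginal_gain f P (y # ys)) (A \<inter> set ys)
      = sum (marginal_gain f (insert y P) ys) (A \<inter> set ys)"
    by (rule sum.cong) (use y in auto)
  also have "\<dots> \<le> f (A \<inter> (P \<union> set (y # ys))) - f (A \<inter> insert y P)"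
    using Cons.prems Cons.IH[of "insert y P"] by auto
  finally have IH: "sum (marginal_gain f P (y # ys)) (A \<inter> set ys)
      \<le> f (A \<inter> (P \<union> set (y # ys))) - f (A \<inter> insert y P)" .
  show ?case
  proof (cases "y \<in> A")
    case True
    have "f (insert y (A \<inter> P) \<union> P) + f (insert y (A \<inter> P) \<inter> P) \<le> f (insert y (A \<inter> P)) + f P"
      using Cons.prems(3,4) y(3) unfolding submodular_on_def by (metis insert_subset le_infI2 le_sup_iff)
    moreover have "insert y (A \<inter> P) \<union> P = insert y P" "insert y (A \<inter> P) \<inter> P = A \<inter> P"
      using y by auto
    ultimately show ?thesis
      using IH True y by (simp add: Int_insert_left)
  next
    case False
    then show ?thesis
      using IH by (simp add: Int_insert_left)
  qed
qed

lemma sorted_takeWhile_superlevel: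
  fixes v :: "'a \<Rightarrow> real"
  assumes "sorted_wrt (\<lambda>a b. v b \<le> v a) xs"
  shows "set (takeWhile (\<lambda>j. \<theta> < v j) xs) = {j \<in> set xs. \<theta> < v j}"
  using assms
proof (induction xs)
  case Nil
  then show ?case by simp
next
  case (Cons y ys)
  then show ?case
    by (cases "\<theta> < v y") (auto intro: less_le_trans)
qed

text \<open>Edmonds' greedy algorithm, run on \<open>V\<close> sorted by decreasing \<open>v\<close>.\<close>
lemma greedy_base_vector:
  assumes "finite V" "submodular_on V f"
  obtains s where "\<And>A. A \<subseteq> V \<Longrightarrow> sum s A \<le> f A - f {}"
    and "\<And>\<theta>. sum s (superlevel_set V v \<theta>) = f (superlevel_set V v \<theta>) - f {}"
proof -
  obtain xs0 where xs0: "set xs0 = V" "distinct xs0"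
    using finite_distinct_list[OF assms(1)] by blast
  define xs where "xs = sort_key (\<lambda>j. - v j) xs0"
  have xs: "set xs = V" "distinct xs"
    using xs0 by (auto simp: xs_def)
  have "sorted (map (\<lambda>j. - v j) xs)"
    unfolding xs_def by (rule sorted_sort_key)
  then have sorted: "sorted_wrt (\<lambda>a b. v b \<le> v a) xs"
    by (simp add: sorted_map)
  have "sum (marginal_gain f {} xs) A \<le> f A - f {}" if "A \<subseteq> V" for A
    using sum_marginal_gain_le[of xs "{}" V f A] xs assms(2) that by (simp add: Int_absorb2)
  moreover have "sum (marginal_gain f {} xs) (superlevel_set V v \<theta>) = f (superlevel_set V v \<theta>) - f {}"
    for \<theta>
  proof -
    have "superlevel_set V v \<theta> = set (takeWhile (\<lambda>j. \<theta> < v j) xs)"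
      using sorted_takeWhile_superlevel[OF sorted] xs by (auto simp: superlevel_set_def)
    also have "\<dots> = set (take (length (takeWhile (\<lambda>j. \<theta> < v j) xs)) xs)"
      by (metis takeWhile_eq_take)
    finally show ?thesis
      using sum_marginal_gain_take[of xs "{}" f] xs by simp
  qed
  ultimately show thesis
    by (rule that)
qed

lemma lovasz_ext_minus_empty:
  assumes "finite V"
  shows "lovasz_ext V f v - f {} = integral {0..1} (\<lambda>\<theta>. f (superlevel_set V v \<theta>) - f {})"
proof -
  have "integral {0..1} (\<lambda>\<theta>. f (superlevel_set V v \<theta>) - f {})
      = integral {0..1} (\<lambda>\<theta>. f (superlevel_set V v \<theta>)) - integral {0..1::real} (\<lambda>_. f {})"
    by (rule integral_diff) (auto intro: integrable_superlevel_set[OF assms])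
  then show ?thesis
    by (simp add: lovasz_ext_superlevel_set)
qed

lemma lovasz_ext_ge_linear:
  assumes "finite V" "\<And>A. A \<subseteq> V \<Longrightarrow> sum s A \<le> f A - f {}" "\<forall>j\<in>V. 0 \<le> v j \<and> v j \<le> 1"
  shows "f {} + (\<Sum>j\<in>V. s j * v j) \<le> lovasz_ext V f v"
proof -
  have "(\<Sum>j\<in>V. s j * v j) = integral {0..1} (\<lambda>\<theta>. sum s (superlevel_set V v \<theta>))"
    using integral_sum_superlevel_set[OF assms(1,3)] by simp
  also have "\<dots> \<le> integral {0..1} (\<lambda>\<theta>. f (superlevel_set V v \<theta>) - f {})"
    using assms(2) superlevel_set_subset[of V v]
    by (intro integral_le integrable_superlevel_set[OF assms(1)]) auto
  also have "\<dots> = lovasz_ext V f v - f {}"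
    by (rule lovasz_ext_minus_empty[OF assms(1), symmetric])
  finally show ?thesis by simp
qed

lemma lovasz_ext_greedy:
  assumes "finite V" "submodular_on V f" "\<forall>j\<in>V. 0 \<le> v j \<and> v j \<le> 1"
  obtains s where "\<And>A. A \<subseteq> V \<Longrightarrow> sum s A \<le> f A - f {}"
    and "lovasz_ext V f v = f {} + (\<Sum>j\<in>V. s j * v j)"
proof -
  obtain s where s: "\<And>A. A \<subseteq> V \<Longrightarrow> sum s A \<le> f A - f {}"
    and tight: "\<And>\<theta>. sum s (superlevel_set V v \<theta>) = f (superlevel_set V v \<theta>) - f {}"
    using greedy_base_vector[OF assms(1,2)] by blast
  have "lovasz_ext V f v - f {} = integral {0..1} (\<lambda>\<theta>. f (superlevel_set V v \<theta>) - f {})"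
    by (rule lovasz_ext_minus_empty[OF assms(1)])
  also have "\<dots> = (\<Sum>j\<in>V. s j * v j)"
    using integral_sum_superlevel_set[OF assms(1,3), of s] by (simp add: tight)
  finally show ?thesis
    using that[OF s] by simp
qed

text \<open>The greedy vector of \<open>v\<close> is a linear minorant of \<open>lovasz_ext V f - f {}\<close> that is tight at \<open>v\<close>.\<close>
lemma lovasz_ext_conic_combination:
  assumes "finite V" "submodular_on V f" "finite R"
    and "\<forall>j\<in>V. 0 \<le> v j \<and> v j \<le> 1"
    and "\<forall>r\<in>R. \<forall>j\<in>V. 0 \<le> H r j \<and> H r j \<le> 1"
    and "\<forall>r\<in>R. 0 \<le> a r"
    and "\<forall>j\<in>V. v j = (\<Sum>r\<in>R. a r * H r j)"
  shows "lovasz_ext V f v - f {} \<le> (\<Sum>r\<in>R. a r * (lovasz_ext V f (H r) - f {}))"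
proof -
  obtain s where s: "\<And>A. A \<subseteq> V \<Longrightarrow> sum s A \<le> f A - f {}"
    and v: "lovasz_ext V f v = f {} + (\<Sum>j\<in>V. s j * v j)"
    using lovasz_ext_greedy[OF assms(1,2,4)] by blast
  have "lovasz_ext V f v - f {} = (\<Sum>j\<in>V. s j * (\<Sum>r\<in>R. a r * H r j))"
    using v assms(7) by simp
  also have "\<dots> = (\<Sum>r\<in>R. a r * (\<Sum>j\<in>V. s j * H r j))"
    by (simp add: sum_distrib_left mult_ac sum.swap[of _ V])
  also have "\<dots> \<le> (\<Sum>r\<in>R. a r * (lovasz_ext V f (H r) - f {}))"
    using lovasz_ext_ge_linear[OF assms(1) s] assms(5,6)
    by (intro sum_mono mult_left_mono) (auto simp: le_diff_eq add.commute)
  finally show ?thesis .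
qed

section \<open>The two halves of the Lovasz extension\<close>

definition lovasz_lower :: "'a set \<Rightarrow> ('a set \<Rightarrow> real) \<Rightarrow> ('a \<Rightarrow> real) \<Rightarrow> real" where
  "lovasz_lower V f v = integral {0..1/2} (\<lambda>\<theta>. f (superlevel_set V v \<theta>))"

definition lovasz_upper :: "'a set \<Rightarrow> ('a set \<Rightarrow> real) \<Rightarrow> ('a \<Rightarrow> real) \<Rightarrow> real" where
  "lovasz_upper V f v = integral {1/2..1} (\<lambda>\<theta>. f (superlevel_set V v \<theta>))"

lemma lovasz_ext_split:
  assumes "finite V"
  shows "lovasz_ext V f v = lovasz_lower V f v + lovasz_upper V f v"
  unfolding lovasz_ext_superlevel_set lovasz_lower_def lovasz_upper_def
  by (rule Henstock_Kurzweil_Integration.integral_combine[symmetric])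
     (auto intro: integrable_superlevel_set[OF assms])

lemma lovasz_upper_below_half:
  assumes "\<forall>j\<in>V. v j \<le> 1/2"
  shows "lovasz_upper V f v = f {} / 2"
proof -
  have "superlevel_set V v \<theta> = {}" if "1/2 \<le> \<theta>" for \<theta>
    using assms that by (force simp: superlevel_set_def)
  then have "lovasz_upper V f v = integral {1/2..1::real} (\<lambda>_. f {})"
    unfolding lovasz_upper_def by (intro integral_cong) auto
  then show ?thesis
    by simp
qed

lemma lovasz_upper_nonneg:
  assumes "finite V" "\<forall>S\<subseteq>V. 0 \<le> f S"
  shows "0 \<le> lovasz_upper V f v"
  unfolding lovasz_upper_def using assms superlevel_set_subset[of V v]
  by (intro integral_nonneg integrable_superlevel_set) auto

lemma lovasz_lower_nonneg:
  assumes "finite V" "\<forall>S\<subseteq>V. 0 \<le> f S"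
  shows "0 \<le> lovasz_lower V f v"
  unfolding lovasz_lower_def using assms superlevel_set_subset[of V v]
  by (intro integral_nonneg integrable_superlevel_set) auto

lemma lovasz_ext_conic_combination_below_half:
  assumes "finite V" "submodular_on V f" "finite R"
    and "\<forall>j\<in>V. 0 \<le> v j \<and> v j \<le> 1"
    and "\<forall>r\<in>R. \<forall>j\<in>V. 0 \<le> H r j \<and> H r j \<le> 1/2"
    and "\<forall>r\<in>R. 0 \<le> a r"
    and "\<forall>j\<in>V. v j = (\<Sum>r\<in>R. a r * H r j)"
  shows "lovasz_ext V f v - f {} \<le> (\<Sum>r\<in>R. a r * (lovasz_lower V f (H r) - f {} / 2))"
proof -
  have "lovasz_ext V f v - f {} \<le> (\<Sum>r\<in>R. a r * (lovasz_ext V f (H r) - f {}))"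
    using assms(5) by (intro lovasz_ext_conic_combination[OF assms(1-4) _ assms(6,7)]) force
  also have "\<dots> = (\<Sum>r\<in>R. a r * (lovasz_lower V f (H r) - f {} / 2))"
    using assms(5) by (intro sum.cong) (auto simp: lovasz_ext_split[OF assms(1)] lovasz_upper_below_half)
  finally show ?thesis .
qed

lemma lovasz_lower_min_half: "lovasz_lower V f (\<lambda>j. min (1/2) (v j)) = lovasz_lower V f v"
  unfolding lovasz_lower_def
proof (rule integral_spike[of "{1/2}"])
  fix \<theta> :: real
  assume "\<theta> \<in> {0..1/2} - {1/2}"
  then have "superlevel_set V (\<lambda>j. min (1/2) (v j)) \<theta> = superlevel_set V v \<theta>"
    by (auto simp: superlevel_set_def)
  then show "f (superlevel_set V v \<theta>) = f (superlevel_set V (\<lambda>j. min (1/2) (v j)) \<theta>)"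
    by simp
qed simp

lemma lovasz_lower_max_min:
  assumes "finite V" "submodular_on V f"
  shows "lovasz_lower V f (\<lambda>j. max (v j) (w j)) + lovasz_lower V f (\<lambda>j. min (v j) (w j))
    \<le> lovasz_lower V f v + lovasz_lower V f w"
proof -
  have I: "(\<lambda>\<theta>. f (superlevel_set V u \<theta>)) integrable_on {0..1/2}" for u
    by (rule integrable_superlevel_set[OF assms(1)])
  have "superlevel_set V (\<lambda>j. max (v j) (w j)) \<theta> = superlevel_set V v \<theta> \<union> superlevel_set V w \<theta>"
    "superlevel_set V (\<lambda>j. min (v j) (w j)) \<theta> = superlevel_set V v \<theta> \<inter> superlevel_set V w \<theta>"
    for \<theta>
    by (auto simp: superlevel_set_def)
  then have "f (superlevel_set V (\<lambda>j. max (v j) (w j)) \<theta>) + f (superlevel_set V (\<lambda>j. min (v j) (w j)) \<theta>)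
      \<le> f (superlevel_set V v \<theta>) + f (superlevel_set V w \<theta>)" for \<theta>
    using assms(2) superlevel_set_subset[of V] unfolding submodular_on_def by simp
  then show ?thesis
    unfolding lovasz_lower_def
    by (simp add: integral_add[OF I I, symmetric] integral_le integrable_add[OF I I])
qed

primrec running_max :: "(nat \<Rightarrow> 'a \<Rightarrow> real) \<Rightarrow> nat \<Rightarrow> 'a \<Rightarrow> real" where
  "running_max x 0 = x 0"
| "running_max x (Suc n) = (\<lambda>j. max (running_max x n j) (x (Suc n) j))"

lemma running_max_ge: "l \<le> n \<Longrightarrow> x l j \<le> running_max x n j"
  by (induction n) (auto simp: le_Suc_eq intro: max.coboundedI1)

lemma running_max_attained: "\<exists>l\<le>n. running_max x n j = x l j"
proof (induction n)
  case 0
  then show ?case by simp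
next
  case (Suc n)
  then show ?case
    by (metis le_SucI max_def order_refl running_max.simps(2))
qed

lemma sum_eq_running_max_plus_mins:
  "(\<Sum>i\<le>n. x i j) = running_max x n j + (\<Sum>r\<in>{1..n}. min (running_max x (r - 1) j) (x r j))"
proof (induction n)
  case 0
  then show ?case by simp
next
  case (Suc n)
  have "{1..Suc n} = insert (Suc n) {1..n}"
    by auto
  then show ?case
    using Suc by (simp add: max_def min_def)
qed

lemma lovasz_lower_sum_ge_running_max:
  assumes "finite V" "submodular_on V f"
  shows "lovasz_lower V f (running_max x n)
      + (\<Sum>r\<in>{1..n}. lovasz_lower V f (\<lambda>j. min (running_max x (r - 1) j) (x r j)))
    \<le> (\<Sum>i\<le>n. lovasz_lower V f (x i))"
proof (induction n)
  case 0
  then show ?case by simp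
next
  case (Suc n)
  have "{1..Suc n} = insert (Suc n) {1..n}"
    by auto
  then show ?case
    using Suc lovasz_lower_max_min[OF assms, of "running_max x n" "x (Suc n)"] by simp
qed

lemma integral_Ioc_eq_Icc:
  fixes h :: "real \<Rightarrow> real"
  shows "integral {a<..b} h = integral {a..b} h"
  by (rule integral_spike_set; rule negligible_subset[of "{a}"]; auto)

lemma has_integral_reflect_half:
  fixes h :: "real \<Rightarrow> real"
  assumes "(h has_integral i) {0..1/2}"
  shows "((\<lambda>\<theta>. h (1 - \<theta>)) has_integral i) {1/2..1}"
proof -
  have "((\<lambda>\<theta>. h (- \<theta>)) has_integral i) {- (1/2)..- 0}"
    by (rule has_integral_reflect_real[THEN iffD2, OF assms])
  then have "(((\<lambda>\<theta>. h (- \<theta>)) \<circ> (+) (-1)) has_integral i) {1/2..1}"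
    using has_integral_shift_Icc_real[of "\<lambda>\<theta>. h (- \<theta>)" "-1" i "1/2" 1] by simp
  then show ?thesis
    by (simp add: o_def)
qed

section \<open>The rounding\<close>

locale fractional_assignment =
  fixes V :: "'a set" and k :: nat and x :: "nat \<Rightarrow> 'a \<Rightarrow> real"
  assumes sum_eq_one: "j \<in> V \<Longrightarrow> (\<Sum>i<k. x i j) = 1"
    and nonneg: "i < k \<Longrightarrow> j \<in> V \<Longrightarrow> 0 \<le> x i j"
begin

lemma add_le_one:
  assumes "i < k" "l < k" "i \<noteq> l" "j \<in> V"
  shows "x i j + x l j \<le> 1"
proof -
  have "(\<Sum>i\<in>{i, l}. x i j) \<le> (\<Sum>i<k. x i j)"
    using assms nonneg by (intro sum_mono2) auto
  then show ?thesis
    using assms sum_eq_one by simp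
qed

lemma le_one:
  assumes "i < k" "j \<in> V"
  shows "x i j \<le> 1"
proof -
  have "(\<Sum>i\<in>{i}. x i j) \<le> (\<Sum>i<k. x i j)"
    using assms nonneg by (intro sum_mono2) auto
  then show ?thesis
    using assms sum_eq_one by simp
qed

lemma level_sets_disjoint:
  assumes "1/2 \<le> \<theta>" "i < k" "l < k" "i \<noteq> l"
  shows "level_set V x i \<theta> \<inter> level_set V x l \<theta> = {}"
  using assms add_le_one[of i l] by (force simp: level_set_def)

lemma rounded_set_subset: "rounded_set V k x \<theta> i' i \<subseteq> V"
  by (auto simp: rounded_set_def level_set_def unassigned_def)

lemma level_set_subset_rounded_set: "level_set V x i \<theta> \<subseteq> rounded_set V k x \<theta> i' i"
  by (auto simp: rounded_set_def)

lemma Union_rounded_set: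
  assumes "i' < k"
  shows "(\<Union>i<k. rounded_set V k x \<theta> i' i) = V"
proof (rule subset_antisym)
  show "V \<subseteq> (\<Union>i<k. rounded_set V k x \<theta> i' i)"
  proof
    fix j
    assume j: "j \<in> V"
    show "j \<in> (\<Union>i<k. rounded_set V k x \<theta> i' i)"
    proof (cases "\<exists>l<k. j \<in> level_set V x l \<theta>")
      case True
      then show ?thesis
        using level_set_subset_rounded_set by blast
    next
      case False
      then have "j \<in> rounded_set V k x \<theta> i' i'"
        using j by (auto simp: rounded_set_def unassigned_def)
      then show ?thesis
        using assms by blast
    qed
  qed
qed (use rounded_set_subset in blast)

lemma rounded_sets_disjoint:
  assumes "1/2 \<le> \<theta>" "i < k" "l < k" "i \<noteq> l"
  shows "rounded_set V k x \<theta> i' i \<inter> rounded_set V k x \<theta> i' l = {}"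
  using assms level_sets_disjoint[OF assms] by (auto simp: rounded_set_def unassigned_def)

end

locale submodular_rounding = fractional_assignment V k x
  for V :: "'a set" and k x +
  fixes f :: "'a set \<Rightarrow> real"
  assumes finite_V: "finite V"
    and f_nonneg: "\<forall>S\<subseteq>V. 0 \<le> f S"
    and submodular: "submodular_on V f"
    and two_le_k: "2 \<le> k"
begin

definition max_share :: "'a \<Rightarrow> real" where
  "max_share = running_max x (k - 1)"

text \<open>This is \<open>u\<close> of the proof idea: for \<open>\<theta> > 1/2\<close> not among the values of \<open>x\<close>, the element \<open>j\<close>
  is unassigned iff \<open>leftover j > 1 - \<theta>\<close>. The cap at 1/2 leaves the superlevel sets at
  thresholds below 1/2 unchanged.\<close>
definition leftover :: "'a \<Rightarrow> real" where
  "leftover j = min (1/2) (1 - max_share j)"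

lemma max_share_ge: "l < k \<Longrightarrow> x l j \<le> max_share j"
  unfolding max_share_def by (rule running_max_ge) simp

lemma max_share_attained: obtains l where "l < k" "max_share j = x l j"
proof -
  obtain l where l: "l \<le> k - 1" "running_max x (k - 1) j = x l j"
    using running_max_attained[of "k - 1" x j] by blast
  have "l < k"
    using l(1) two_le_k by simp
  with l(2) show thesis
    by (intro that[of l]) (simp_all add: max_share_def)
qed

lemma max_share_bounds: "j \<in> V \<Longrightarrow> 0 \<le> max_share j \<and> max_share j \<le> 1"
  by (metis max_share_attained le_one nonneg)

lemma leftover_bounds: "j \<in> V \<Longrightarrow> 0 \<le> leftover j \<and> leftover j \<le> 1/2"
  using max_share_bounds[of j] by (auto simp: leftover_def min_def)

lemma mem_unassigned_iff:
  assumes j: "j \<in> V" and generic: "\<forall>l<k. x l j \<noteq> \<theta>"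
  shows "j \<in> unassigned V k x \<theta> \<longleftrightarrow> max_share j < \<theta>"
proof
  obtain l where l: "l < k" "max_share j = x l j"
    by (rule max_share_attained)
  assume "j \<in> unassigned V k x \<theta>"
  then have "\<not> \<theta> < x l j"
    using l(1) j by (auto simp: unassigned_def level_set_def)
  then show "max_share j < \<theta>"
    using l generic by force
next
  assume less: "max_share j < \<theta>"
  have "\<not> \<theta> < x i j" if "i < k" for i
    using max_share_ge[OF that, of j] less by simp
  then show "j \<in> unassigned V k x \<theta>"
    using j by (auto simp: unassigned_def level_set_def)
qed

text \<open>A share of \<open>j\<close> other than the largest is at most \<open>1 - max_share j\<close>, so once
  \<open>max_share j > \<theta>\<close> no share lies in \<open>(1 - \<theta>, \<theta>]\<close>.\<close>
lemma less_share_iff_reflected: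
  assumes "i < k" "j \<in> V" "1/2 < \<theta>" "\<theta> < max_share j"
  shows "\<theta> < x i j \<longleftrightarrow> 1 - \<theta> < x i j"
proof
  assume reflected: "1 - \<theta> < x i j"
  obtain l where l: "l < k" "max_share j = x l j"
    by (rule max_share_attained)
  show "\<theta> < x i j"
  proof (rule ccontr)
    assume "\<not> \<theta> < x i j"
    then have "i \<noteq> l"
      using assms(4) l by auto
    then have "x i j \<le> 1 - max_share j"
      using add_le_one[OF assms(1) l(1) _ assms(2)] l(2) by simp
    then show False
      using assms(4) reflected by simp
  qed
qed (use assms(3) in simp)

lemma rounded_set_reflected:
  assumes \<theta>: "1/2 < \<theta>" and i': "i' < k" and generic: "\<forall>l<k. \<forall>j\<in>V. x l j \<noteq> \<theta>"
  shows "rounded_set V k x \<theta> i' i' = superlevel_set V (\<lambda>j. max (leftover j) (x i' j)) (1 - \<theta>)"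
proof (rule set_eqI)
  fix j
  show "j \<in> rounded_set V k x \<theta> i' i'
    \<longleftrightarrow> j \<in> superlevel_set V (\<lambda>j. max (leftover j) (x i' j)) (1 - \<theta>)"
  proof (cases "j \<in> V")
    case False
    then show ?thesis
      using rounded_set_subset[of \<theta> i' i'] superlevel_set_subset[of V _ "1 - \<theta>"] by blast
  next
    case j: True
    have "max_share j \<noteq> \<theta>"
      using generic j by (metis max_share_attained)
    moreover have "1 - \<theta> < leftover j \<longleftrightarrow> max_share j < \<theta>"
      using \<theta> by (auto simp: leftover_def)
    ultimately show ?thesis
      using j \<theta> i' generic mem_unassigned_iff[OF j] less_share_iff_reflected[OF i' j \<theta>]
      by (auto simp: rounded_set_def level_set_def superlevel_set_def less_max_iff_disj)
  qed
qed

lemma has_integral_rounded_set_chosen: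
  assumes i': "i' < k"
  shows "((\<lambda>\<theta>. f (rounded_set V k x \<theta> i' i'))
      has_integral lovasz_lower V f (\<lambda>j. max (leftover j) (x i' j))) {1/2..1}"
proof -
  let ?w = "\<lambda>j. max (leftover j) (x i' j)"
  have "((\<lambda>\<theta>. f (superlevel_set V ?w \<theta>)) has_integral lovasz_lower V f ?w) {0..1/2}"
    unfolding lovasz_lower_def by (rule integrable_integral integrable_superlevel_set[OF finite_V])+
  then have reflected: "((\<lambda>\<theta>. f (superlevel_set V ?w (1 - \<theta>))) has_integral lovasz_lower V f ?w) {1/2..1}"
    by (rule has_integral_reflect_half)
  let ?F = "insert (1/2) ((\<lambda>(l, j). x l j) ` ({..<k} \<times> V))"
  show ?thesis
  proof (rule has_integral_spike_finite[OF _ _ reflected])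
    show "finite ?F"
      using finite_V by simp
    fix \<theta>
    assume "\<theta> \<in> {1/2..1} - ?F"
    then have "1/2 < \<theta>" "\<forall>l<k. \<forall>j\<in>V. x l j \<noteq> \<theta>"
      by auto
    then show "f (rounded_set V k x \<theta> i' i') = f (superlevel_set V ?w (1 - \<theta>))"
      using rounded_set_reflected[OF _ i'] by simp
  qed
qed

lemma integral_rounded_cost:
  assumes i': "i' < k"
  shows "integral {1/2<..1} (\<lambda>\<theta>. \<Sum>i<k. f (rounded_set V k x \<theta> i' i))
    = lovasz_lower V f (\<lambda>j. max (leftover j) (x i' j))
      + ((\<Sum>i<k. lovasz_upper V f (x i)) - lovasz_upper V f (x i'))"
proof -
  have split: "(\<Sum>i<k. f (rounded_set V k x \<theta> i' i))
      = f (rounded_set V k x \<theta> i' i') + (\<Sum>i\<in>{..<k} - {i'}. f (superlevel_set V (x i) \<theta>))" for \<theta>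
    using i' by (simp add: sum.remove rounded_set_def level_set_eq_superlevel_set)
  have "((\<lambda>\<theta>. \<Sum>i<k. f (rounded_set V k x \<theta> i' i)) has_integral
      lovasz_lower V f (\<lambda>j. max (leftover j) (x i' j))
        + (\<Sum>i\<in>{..<k} - {i'}. lovasz_upper V f (x i))) {1/2..1}"
    unfolding split lovasz_upper_def
    by (intro has_integral_add has_integral_rounded_set_chosen[OF i'] has_integral_sum
        integrable_integral integrable_superlevel_set[OF finite_V]) auto
  then show ?thesis
    using i' by (simp add: integral_Ioc_eq_Icc integral_unique sum_diff1)
qed

lemma expected_rounding_cost_eq:
  "expected_rounding_cost V f k x
    = 2 / real k * ((\<Sum>i<k. lovasz_lower V f (\<lambda>j. max (leftover j) (x i j)))
                     + (real k - 1) * (\<Sum>i<k. lovasz_upper V f (x i)))"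
proof -
  have "expected_rounding_cost V f k x
      = 2 / real k * (\<Sum>i'<k. lovasz_lower V f (\<lambda>j. max (leftover j) (x i' j))
                      + ((\<Sum>i<k. lovasz_upper V f (x i)) - lovasz_upper V f (x i')))"
    by (simp add: expected_rounding_cost_def integral_rounded_cost sum_distrib_left)
  then show ?thesis
    by (simp add: sum.distrib sum_subtractf algebra_simps)
qed

lemma leftover_eq_half_sum_min:
  assumes j: "j \<in> V"
  shows "leftover j = (\<Sum>i<k. 1/2 * min (leftover j) (x i j))"
proof (cases "max_share j \<le> 1/2")
  case True
  then have "leftover j = 1/2"
    by (simp add: leftover_def)
  moreover have "min (leftover j) (x i j) = x i j" if "i < k" for i
    using max_share_ge[OF that, of j] True \<open>leftover j = 1/2\<close> by simp
  ultimately show ?thesis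
    using sum_eq_one[OF j] by (simp add: sum_divide_distrib[symmetric])
next
  case False
  obtain l where l: "l < k" "max_share j = x l j"
    by (rule max_share_attained)
  have leftover: "leftover j = 1 - x l j"
    using False l by (simp add: leftover_def)
  have "min (leftover j) (x i j) = x i j" if "i < k" "i \<noteq> l" for i
    using add_le_one[OF that(1) l(1) that(2) j] leftover by simp
  then have "(\<Sum>i\<in>{..<k} - {l}. min (leftover j) (x i j)) = (\<Sum>i\<in>{..<k} - {l}. x i j)"
    by (intro sum.cong) auto
  also have "\<dots> = leftover j"
    using sum_eq_one[OF j] l(1) leftover by (simp add: sum_diff1)
  finally have "(\<Sum>i<k. min (leftover j) (x i j)) = min (leftover j) (x l j) + leftover j"
    using l(1) by (simp add: sum.remove)
  moreover have "min (leftover j) (x l j) = leftover j"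
    using False l leftover by simp
  ultimately show ?thesis
    by (simp add: sum_divide_distrib[symmetric])
qed

lemma lovasz_lower_leftover_le_half_sum:
  "2 * lovasz_lower V f leftover \<le> (\<Sum>i<k. lovasz_lower V f (\<lambda>j. min (leftover j) (x i j)))"
  (is "_ \<le> (\<Sum>i<k. ?G i)")
proof -
  have "lovasz_ext V f leftover - f {} \<le> (\<Sum>i<k. 1/2 * (?G i - f {} / 2))"
    using nonneg leftover_eq_half_sum_min
    by (intro lovasz_ext_conic_combination_below_half[OF finite_V submodular])
       (auto simp: min_le_iff_disj dest!: leftover_bounds)
  also have "\<dots> = (\<Sum>i<k. ?G i) / 2 - real k * f {} / 4"
    by (simp add: sum_divide_distrib[symmetric] sum_subtractf)
  finally have "lovasz_ext V f leftover - f {} \<le> (\<Sum>i<k. ?G i) / 2 - real k * f {} / 4" .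
  moreover have "lovasz_ext V f leftover = lovasz_lower V f leftover + f {} / 2"
    using leftover_bounds by (simp add: lovasz_ext_split[OF finite_V] lovasz_upper_below_half)
  moreover have "2 * f {} \<le> real k * f {}"
    using two_le_k f_nonneg by (intro mult_right_mono) auto
  ultimately show ?thesis
    by linarith
qed

lemma one_minus_max_share:
  assumes "j \<in> V"
  shows "1 - max_share j = (\<Sum>r\<in>{1..k - 1}. min (running_max x (r - 1) j) (x r j))"
proof -
  have "{..k - 1} = {..<k}"
    using two_le_k by auto
  then show ?thesis
    using sum_eq_running_max_plus_mins[where x = x and n = "k - 1" and j = j] sum_eq_one[OF assms]
    by (simp add: max_share_def)
qed

lemma min_running_max_le_half:
  assumes "1 \<le> r" "r < k" "j \<in> V"
  shows "0 \<le> min (running_max x (r - 1) j) (x r j) \<and> min (running_max x (r - 1) j) (x r j) \<le> 1/2"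
proof -
  obtain l where l: "l \<le> r - 1" "running_max x (r - 1) j = x l j"
    using running_max_attained[of "r - 1" x j] by blast
  then have "x r j + x l j \<le> 1" "0 \<le> x l j" "0 \<le> x r j"
    using assms add_le_one[of r l j] nonneg[of _ j] by auto
  then show ?thesis
    using l(2) by (simp add: min_def)
qed

lemma lovasz_lower_leftover_le:
  assumes "3 \<le> k"
  shows "lovasz_lower V f leftover \<le> (\<Sum>i<k. lovasz_lower V f (x i))"
proof -
  define L where "L = (\<lambda>r j. min (running_max x (r - 1) j) (x r j))"
  have k: "{..k - 1} = {..<k}"
    using two_le_k by auto
  have "\<forall>j\<in>V. 0 \<le> 1 - max_share j \<and> 1 - max_share j \<le> 1"
    using max_share_bounds by auto
  then have "lovasz_ext V f (\<lambda>j. 1 - max_share j) - f {}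
      \<le> (\<Sum>r\<in>{1..k - 1}. 1 * (lovasz_lower V f (L r) - f {} / 2))"
    using min_running_max_le_half one_minus_max_share unfolding L_def
    by (intro lovasz_ext_conic_combination_below_half[OF finite_V submodular finite_atLeastAtMost])
       auto
  moreover have "lovasz_lower V f leftover \<le> lovasz_ext V f (\<lambda>j. 1 - max_share j)"
    using lovasz_lower_min_half[of V f "\<lambda>j. 1 - max_share j"]
      lovasz_upper_nonneg[OF finite_V f_nonneg, of "\<lambda>j. 1 - max_share j"]
    by (simp add: lovasz_ext_split[OF finite_V] leftover_def[abs_def])
  moreover have "2 * f {} \<le> real (k - 1) * f {}"
    using assms f_nonneg by (intro mult_right_mono) auto
  moreover have "(\<Sum>r\<in>{1..k - 1}. lovasz_lower V f (L r)) \<le> (\<Sum>i<k. lovasz_lower V f (x i))"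
    using lovasz_lower_sum_ge_running_max[OF finite_V submodular, where x = x and n = "k - 1"]
      lovasz_lower_nonneg[OF finite_V f_nonneg, of "running_max x (k - 1)"] k
    by (simp add: L_def; linarith)
  ultimately show ?thesis
    by (simp add: sum_subtractf)
qed

lemma sum_lovasz_lower_merged_le:
  "(\<Sum>i<k. lovasz_lower V f (\<lambda>j. max (leftover j) (x i j)))
    \<le> (real k - 1) * (\<Sum>i<k. lovasz_lower V f (x i))"
proof -
  have "(\<Sum>i<k. lovasz_lower V f (\<lambda>j. max (leftover j) (x i j)))
      \<le> (\<Sum>i<k. lovasz_lower V f leftover + lovasz_lower V f (x i)
                  - lovasz_lower V f (\<lambda>j. min (leftover j) (x i j)))"
    using lovasz_lower_max_min[OF finite_V submodular, of leftover] by (intro sum_mono) (simp add: algebra_simps)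
  also have "\<dots> \<le> (real k - 2) * lovasz_lower V f leftover + (\<Sum>i<k. lovasz_lower V f (x i))"
    using lovasz_lower_leftover_le_half_sum by (simp add: sum.distrib sum_subtractf algebra_simps)
  also have "\<dots> \<le> (real k - 1) * (\<Sum>i<k. lovasz_lower V f (x i))"
  proof (cases "k = 2")
    case True
    then show ?thesis by simp
  next
    case False
    then have "lovasz_lower V f leftover \<le> (\<Sum>i<k. lovasz_lower V f (x i))"
      using two_le_k by (intro lovasz_lower_leftover_le) simp
    then have "(real k - 2) * lovasz_lower V f leftover \<le> (real k - 2) * (\<Sum>i<k. lovasz_lower V f (x i))"
      using two_le_k by (intro mult_left_mono) auto
    then show ?thesis
      by (simp add: algebra_simps)
  qed
  finally show ?thesis .
qed

lemma expected_rounding_cost_le: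
  "expected_rounding_cost V f k x \<le> (2 - 2 / real k) * (\<Sum>i<k. lovasz_ext V f (x i))"
proof -
  have "expected_rounding_cost V f k x
      \<le> 2 / real k * ((real k - 1) * (\<Sum>i<k. lovasz_lower V f (x i))
                      + (real k - 1) * (\<Sum>i<k. lovasz_upper V f (x i)))"
    unfolding expected_rounding_cost_eq
    by (intro mult_left_mono add_right_mono sum_lovasz_lower_merged_le) simp
  also have "\<dots> = (2 - 2 / real k) * (\<Sum>i<k. lovasz_ext V f (x i))"
    using two_le_k by (simp add: lovasz_ext_split[OF finite_V] sum.distrib field_simps)
  finally show ?thesis .
qed

end

theorem theorem2:
  fixes V :: "'a set" and f :: "'a set \<Rightarrow> real" and k :: nat
    and t :: "nat \<Rightarrow> 'a" and x :: "nat \<Rightarrow> 'a \<Rightarrow> real"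
  assumes "finite V"
    and "\<forall>S. S \<subseteq> V \<longrightarrow> f S \<ge> 0"
    and "submodular_on V f"
    and "k \<ge> 2"
    and "\<forall>i<k. t i \<in> V"
    and "inj_on t {..<k}"
    and "relax_feasible V k t x"
  shows "(\<forall>\<theta> \<in> {1/2<..<1}. \<forall>i'<k.
            (\<forall>i<k. rounded_set V k x \<theta> i' i \<subseteq> V \<and> t i \<in> rounded_set V k x \<theta> i' i)
          \<and> (\<Union>i<k. rounded_set V k x \<theta> i' i) = V
          \<and> (\<forall>i<k. \<forall>l<k. i \<noteq> l \<longrightarrow> rounded_set V k x \<theta> i' i \<inter> rounded_set V k x \<theta> i' l = {}))
       \<and> expected_rounding_cost V f k x \<le> (2 - 2 / real k) * (\<Sum>i<k. lovasz_ext V f (x i))"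
proof -
  interpret submodular_rounding V k x f
    using assms(1-4,7) by unfold_locales (auto simp: relax_feasible_def)
  have terminal: "t i \<in> rounded_set V k x \<theta> i' i" if "i < k" "\<theta> < 1" for i \<theta> i'
  proof -
    have "t i \<in> level_set V x i \<theta>"
      using that assms(5,7) by (simp add: relax_feasible_def level_set_def)
    then show ?thesis
      using level_set_subset_rounded_set by blast
  qed
  show ?thesis
    using rounded_set_subset terminal Union_rounded_set rounded_sets_disjoint expected_rounding_cost_le
    by simp
qed

end
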